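(* Consider the algorithm described in the context, where $\psi$ can be truncated, and assume that the iterates are bounded (there is $R>0$ with $\{x^k\}\subseteq B_R(0)$). Let $\tilde x^k$ denote the point before the truncation step of iteration $k$ and $x^{k+1}$ the point after it. Then $$\sum_{k=0}^\infty\|x^{k+1}-\tilde x^k\|\le m\kappa\sum_{i=0}^\infty\epsilon_i<\infty\quad\text{and}\quad\sum_{k=0}^\infty|\psi(x^{k+1})-\psi(\tilde x^k)|<\infty.$$
   Context: Problem: minimize $\psi=f+\varphi$ where $f:\mathbb{R}^n\to\mathbb{R}$ is continuously differentiable and $\varphi:\mathbb{R}^n\to\mathbb{R}$ is convex. Notation: $\|\cdot\|$ Euclidean norm, $B_r(x)$ open ball, $\bar v=v/\|v\|$, $\psi'(x;d)$ directional derivative, $\partial\psi(x)=\nabla f(x)+\partial\varphi(x)$; $x$ is stationary if $0\in\partial\psi(x)$. Pseudo-gradient: $g(x)=u(x)d(x)$ where, for non-stationary $x$, $\|d(x)\|=1$, $\psi'(x;d(x))<0$, $u(x)\in[\psi'(x;d(x)),0)$, and for stationary $x$, $d(x)=0$, $u(x)=0$. Safeguards: for $\|d\|=1$, $\Gamma_{\max}(x,d)=\sup\{T>0: t\mapsto\psi(x+td)\text{ is } C^1\text{ on }(0,T)\}$, $\Gamma(x)=\inf_{\|d\|=1}\Gamma_{\max}(x,d)$; a stepsize safeguard $(x,d)\mapsto\Gamma(x,d)\in(0,\infty]$ is fixed. Truncation: $\psi$ can be truncated with data $\mathbb{R}^n=S_0\supset\cdots\supset S_m$, $\delta\in(0,\infty]$,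 $\kappa>0$, $T:\mathbb{R}^n\times(0,\delta]\to\mathbb{R}^n$ meaning (i) $\Gamma(x)\ge\delta$ on $S_m$; (ii) for $a\in(0,\delta]$, $x\in S_i\setminus S_{i+1}$, $i<m$: if $\Gamma(x)\ge a$ then $T(x,a)=x$, else $T(x,a)\in S_{i+1}$, $\Gamma(T(x,a))\ge a$, $\|T(x,a)-x\|\le\kappa a$. Put $S_{m+1}=\emptyset$. Algorithm: parameters $0<\eta<\eta_1<\eta_2<1$, $0<r_1<1<r_2$, $\Delta_{\max}>0$, $\gamma_1,\gamma_2>0$, a positive strictly decreasing summable sequence $(\epsilon_s)$ with $\epsilon_s\le\delta$, a nonincreasing $\ell:(0,\infty)\to[0,\frac12]$ with $\ell(\Delta)\to0$ as $\Delta\to0^+$; start $x^0$, $\Delta_0>0$, counters $c_0=\dots=c_m=0$. Iteration $k$: $g^k=g(x^k)$; stop if $g^k=0$. Choose $B^k\in\mathbb{R}^{n\times n}$, model $m_k(s)=\psi(x^k)+\langle g^k,s\rangle+\frac12\langle s,B^ks\rangle$, Cauchy point $s^k_C=-\alpha^C_kg^k$ with $\alpha^C_k\in\arg\min_{0\le t\le\Delta_k/\|g^k\|}m_k(-tg^k)$. Choose $s^k$, $\|s^k\|\le\Delta_k$, with $m_k(0)-m_k(s^k)\ge\frac{\gamma_1}{2}\|g^k\|\min\{\Delta_k,\gamma_2\|g^k\|\}$ and $m_k(0)-m_k(s^k)\ge(1-\ell(\|s^k\|))(m_k(0)-m_k(s^k_C))$. Let $\rho^1_k=\frac{\psi(x^k)-\psi(x^k+s^k)}{m_k(0)-m_k(s^k)}$.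 If $\rho^1_k\ge\eta_1$: $\tilde x^k=x^k+s^k$, $\Delta_{k+1}=\min\{\Delta_{\max},r_2\Delta_k\}$ if $\rho^1_k>\eta_2$ and $\Delta_{k+1}=\Delta_k$ otherwise. Otherwise: $\alpha_k=\min\{\Gamma(x^k,\bar s^k),\|s^k\|\}$; if $m_k(0)-m_k(\alpha_k\bar s^k)<\frac{\alpha_k}{2\|s^k\|}(m_k(0)-m_k(s^k))$, replace $s^k$ by $s^k_C$ and $\alpha_k=\min\{\Gamma(x^k,\bar s^k_C),\|s^k_C\|\}$; $\rho^2_k=\frac{\psi(x^k)-\psi(x^k+\alpha_k\bar s^k)}{m_k(0)-m_k(\alpha_k\bar s^k)}$; $\Delta_{k+1}=r_1\Delta_k$ if $\rho^2_k<\eta_1$, $=\min\{\Delta_{\max},r_2\Delta_k\}$ if $\rho^2_k>\eta_2$, $=\Delta_k$ otherwise; $\tilde x^k=x^k+\alpha_k\bar s^k$ if $\rho^2_k\ge\eta$ and $\tilde x^k=x^k$ otherwise. Truncation step: set $\tilde x=\tilde x^k$ and repeat {find $i$ with $\tilde x\in S_i\setminus S_{i+1}$; if $\Gamma(\tilde x)<\epsilon_{c_i}$ set $\tilde x\leftarrow T(\tilde x,\epsilon_{c_i})$, $c_i\leftarrow c_i+1$; else stop}; $x^{k+1}=\tilde x$. *)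

theory Defs
  imports "HOL-Analysis.Analysis"
begin

definition C1_on :: "real set \<Rightarrow> (real \<Rightarrow> real) \<Rightarrow> bool" where
  "C1_on S h \<longleftrightarrow> (\<exists>h'. (\<forall>t\<in>S. (h has_real_derivative h' t) (at t)) \<and> continuous_on S h')"

definition dir_deriv :: "('a::real_normed_vector \<Rightarrow> real) \<Rightarrow> 'a \<Rightarrow> 'a \<Rightarrow> real" where
  "dir_deriv \<psi> x d = Lim (at_right 0) (\<lambda>t. (\<psi> (x + t *\<^sub>R d) - \<psi> x) / t)"

definition subdiff :: "('a::real_inner \<Rightarrow> real) \<Rightarrow> 'a \<Rightarrow> 'a set" where
  "subdiff \<phi> x = {v. \<forall>y. \<phi> x + v \<bullet> (y - x) \<le> \<phi> y}"

definition stationary :: "('a::real_inner \<Rightarrow> 'a) \<Rightarrow> ('a \<Rightarrow> real) \<Rightarrow> 'a \<Rightarrow> bool" where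
  "stationary gradf \<phi> x \<longleftrightarrow> 0 \<in> {gradf x + v | v. v \<in> subdiff \<phi> x}"

text \<open>Pseudo-gradient g(x) = u(x) d(x).\<close>
definition pseudo_gradient ::
  "('a::real_inner \<Rightarrow> real) \<Rightarrow> ('a \<Rightarrow> 'a) \<Rightarrow> ('a \<Rightarrow> real) \<Rightarrow> ('a \<Rightarrow> real) \<Rightarrow> ('a \<Rightarrow> 'a) \<Rightarrow> bool" where
  "pseudo_gradient \<psi> gradf \<phi> u d \<longleftrightarrow>
     (\<forall>x. (\<not> stationary gradf \<phi> x \<longrightarrow>
             norm (d x) = 1 \<and> dir_deriv \<psi> x (d x) < 0 \<and>
             dir_deriv \<psi> x (d x) \<le> u x \<and> u x < 0) \<and>
          (stationary gradf \<phi> x \<longrightarrow> d x = 0 \<and> u x = 0))"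

definition Gamma_max :: "('a::real_normed_vector \<Rightarrow> real) \<Rightarrow> 'a \<Rightarrow> 'a \<Rightarrow> ereal" where
  "Gamma_max \<psi> x d = Sup {ereal T | T. T > 0 \<and> C1_on {0<..<T} (\<lambda>t. \<psi> (x + t *\<^sub>R d))}"

definition Gamma :: "('a::real_normed_vector \<Rightarrow> real) \<Rightarrow> 'a \<Rightarrow> ereal" where
  "Gamma \<psi> x = (INF d \<in> {d. norm d = 1}. Gamma_max \<psi> x d)"

text \<open>S_0 ... S_m nested, S_{m+1} = empty (only S 0 .. S m are used).\<close>
definition truncatable ::
  "('a::real_normed_vector \<Rightarrow> real) \<Rightarrow> (nat \<Rightarrow> 'a set) \<Rightarrow> nat \<Rightarrow> ereal \<Rightarrow> real \<Rightarrow> ('a \<Rightarrow> real \<Rightarrow> 'a) \<Rightarrow> bool" where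
  "truncatable \<psi> S m \<delta> \<kappa> T \<longleftrightarrow>
     S 0 = UNIV \<and> (\<forall>i<m. S (Suc i) \<subseteq> S i) \<and> \<delta> > 0 \<and> \<kappa> > 0 \<and>
     (\<forall>x\<in>S m. Gamma \<psi> x \<ge> \<delta>) \<and>
     (\<forall>a i x. 0 < a \<and> ereal a \<le> \<delta> \<and> i < m \<and> x \<in> S i \<and> x \<notin> S (Suc i) \<longrightarrow>
        (Gamma \<psi> x \<ge> ereal a \<longrightarrow> T x a = x) \<and>
        (Gamma \<psi> x < ereal a \<longrightarrow>
           T x a \<in> S (Suc i) \<and> Gamma \<psi> (T x a) \<ge> ereal a \<and> norm (T x a - x) \<le> \<kappa> * a))"

text \<open>x lies in S_i minus S_{i+1} (with S_{m+1} empty).\<close>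
definition level :: "(nat \<Rightarrow> 'a set) \<Rightarrow> nat \<Rightarrow> 'a \<Rightarrow> nat \<Rightarrow> bool" where
  "level S m x i \<longleftrightarrow> i \<le> m \<and> x \<in> S i \<and> (i < m \<longrightarrow> x \<notin> S (Suc i))"

text \<open>The truncation loop: truncation x c y c' means that started at x with counters c,
  the loop terminates at y with counters c'.\<close>
inductive truncation for \<psi> :: "'a::real_normed_vector \<Rightarrow> real" and S m
    and \<epsilon> :: "nat \<Rightarrow> real" and T :: "'a \<Rightarrow> real \<Rightarrow> 'a" where
  stop: "level S m x i \<Longrightarrow> \<not> (Gamma \<psi> x < ereal (\<epsilon> (c i))) \<Longrightarrow> truncation \<psi> S m \<epsilon> T x c x c"
| trunc: "level S m x i \<Longrightarrow> Gamma \<psi> x < ereal (\<epsilon> (c i)) \<Longrightarrow>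
          truncation \<psi> S m \<epsilon> T (T x (\<epsilon> (c i))) (c(i := Suc (c i))) y c' \<Longrightarrow>
          truncation \<psi> S m \<epsilon> T x c y c'"

text \<open>Given x^k, Delta_k and the pseudo-gradient g, the iteration produces tilde x^k and
  Delta_{k+1}; the choices of B^k, alpha^C_k and s^k are existentially quantified.
  Unit vector bar v = v/|v| is sgn v.\<close>
definition tr_iteration ::
  "('a::euclidean_space \<Rightarrow> real) \<Rightarrow> ('a \<Rightarrow> 'a) \<Rightarrow> ('a \<Rightarrow> 'a \<Rightarrow> ereal) \<Rightarrow>
   real \<Rightarrow> real \<Rightarrow> real \<Rightarrow> real \<Rightarrow> real \<Rightarrow> real \<Rightarrow> real \<Rightarrow> real \<Rightarrow> (real \<Rightarrow> real) \<Rightarrow>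
   'a \<Rightarrow> real \<Rightarrow> 'a \<Rightarrow> real \<Rightarrow> bool" where
  "tr_iteration \<psi> g Gs \<eta> \<eta>1 \<eta>2 r1 r2 \<Delta>max \<gamma>1 \<gamma>2 lf xk \<Delta>k xt \<Delta>' \<longleftrightarrow>
    (\<exists>B \<alpha>C s. linear B \<and>
      (let gk = g xk;
           mk = (\<lambda>v. \<psi> xk + gk \<bullet> v + 1/2 * (v \<bullet> B v));
           sC = - (\<alpha>C *\<^sub>R gk)
       in 0 \<le> \<alpha>C \<and> \<alpha>C \<le> \<Delta>k / norm gk \<and>
          (\<forall>t. 0 \<le> t \<and> t \<le> \<Delta>k / norm gk \<longrightarrow> mk sC \<le> mk (- (t *\<^sub>R gk))) \<and>
          norm s \<le> \<Delta>k \<and>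
          mk 0 - mk s \<ge> \<gamma>1 / 2 * norm gk * min \<Delta>k (\<gamma>2 * norm gk) \<and>
          mk 0 - mk s \<ge> (1 - lf (norm s)) * (mk 0 - mk sC) \<and>
          (let \<rho>1 = (\<psi> xk - \<psi> (xk + s)) / (mk 0 - mk s)
           in if \<rho>1 \<ge> \<eta>1 then
                xt = xk + s \<and> \<Delta>' = (if \<rho>1 > \<eta>2 then min \<Delta>max (r2 * \<Delta>k) else \<Delta>k)
              else
                (let \<alpha>0 = real_of_ereal (min (Gs xk (sgn s)) (ereal (norm s)));
                     useC = (mk 0 - mk (\<alpha>0 *\<^sub>R sgn s) < \<alpha>0 / (2 * norm s) * (mk 0 - mk s));
                     s' = (if useC then sC else s);
                     \<alpha> = (if useC then real_of_ereal (min (Gs xk (sgn sC)) (ereal (norm sC))) else \<alpha>0);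
                     \<rho>2 = (\<psi> xk - \<psi> (xk + \<alpha> *\<^sub>R sgn s')) / (mk 0 - mk (\<alpha> *\<^sub>R sgn s'))
                 in \<Delta>' = (if \<rho>2 < \<eta>1 then r1 * \<Delta>k
                          else if \<rho>2 > \<eta>2 then min \<Delta>max (r2 * \<Delta>k) else \<Delta>k) \<and>
                    xt = (if \<rho>2 \<ge> \<eta> then xk + \<alpha> *\<^sub>R sgn s' else xk)))))"

text \<open>x k = x^k, xt k = tilde x^k, D k = Delta_k, c k = counter vector at the start of
  iteration k. When g(x^k) = 0 the algorithm stops; we encode this by keeping all
  quantities constant from then on (so xt k = x k = x (k+1)).\<close>
definition alg_run ::
  "('a::euclidean_space \<Rightarrow> real) \<Rightarrow> ('a \<Rightarrow> 'a) \<Rightarrow> ('a \<Rightarrow> 'a \<Rightarrow> ereal) \<Rightarrow>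
   (nat \<Rightarrow> 'a set) \<Rightarrow> nat \<Rightarrow> ('a \<Rightarrow> real \<Rightarrow> 'a) \<Rightarrow> (nat \<Rightarrow> real) \<Rightarrow>
   real \<Rightarrow> real \<Rightarrow> real \<Rightarrow> real \<Rightarrow> real \<Rightarrow> real \<Rightarrow> real \<Rightarrow> real \<Rightarrow> (real \<Rightarrow> real) \<Rightarrow>
   'a \<Rightarrow> real \<Rightarrow>
   (nat \<Rightarrow> 'a) \<Rightarrow> (nat \<Rightarrow> 'a) \<Rightarrow> (nat \<Rightarrow> real) \<Rightarrow> (nat \<Rightarrow> nat \<Rightarrow> nat) \<Rightarrow> bool" where
  "alg_run \<psi> g Gs S m T \<epsilon> \<eta> \<eta>1 \<eta>2 r1 r2 \<Delta>max \<gamma>1 \<gamma>2 lf x0 \<Delta>0 x xt D c \<longleftrightarrow>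
     x 0 = x0 \<and> D 0 = \<Delta>0 \<and> c 0 = (\<lambda>_. 0) \<and>
     (\<forall>k. (g (x k) = 0 \<longrightarrow>
             xt k = x k \<and> x (Suc k) = x k \<and> D (Suc k) = D k \<and> c (Suc k) = c k) \<and>
          (g (x k) \<noteq> 0 \<longrightarrow>
             tr_iteration \<psi> g Gs \<eta> \<eta>1 \<eta>2 r1 r2 \<Delta>max \<gamma>1 \<gamma>2 lf (x k) (D k) (xt k) (D (Suc k)) \<and>
             truncation \<psi> S m \<epsilon> T (xt k) (c k) (x (Suc k)) (c (Suc k))))"

end

theory Submission
  imports Defs
begin

(* Each truncation at a level i < m moves the point by at most kappa * eps(c_i) and then
   increments c_i (at level m nothing happens, since there Gamma >= delta >= eps). Hence the
   displacement caused by the truncation step of an iteration is at most kappa times the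
   increase of the potential sum_{i<m} sum_{j<c_i} eps_j, which never exceeds
   m * sum_j eps_j; telescoping gives the first claim. For the second, f (continuous gradient)
   and phi (convex, finite-dimensional) are Lipschitz on bounded sets, and the points
   x^{k+1} and tilde x^k stay bounded because their distances are summable. *)

lemma lipschitz_on_bounded_if_continuous_gradient:
  fixes f :: "'a::euclidean_space \<Rightarrow> real"
  assumes deriv: "\<And>y. (f has_derivative (\<lambda>h. gradf y \<bullet> h)) (at y)"
    and cont: "continuous_on UNIV gradf"
    and "bounded K"
  shows "\<exists>L. L-lipschitz_on K f"
proof -
  obtain a r where K: "K \<subseteq> cball a r"
    using \<open>bounded K\<close> unfolding bounded_subset_cball by blast
  have "compact (gradf ` cball a r)"
    by (intro compact_continuous_image continuous_on_subset[OF cont] compact_cball subset_UNIV)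
  then obtain B where B: "\<And>y. y \<in> cball a r \<Longrightarrow> norm (gradf y) \<le> B"
    using compact_imp_bounded[of "gradf ` cball a r"] unfolding bounded_iff by blast
  have "(max 0 B)-lipschitz_on (cball a r) f"
  proof (rule bounded_derivative_imp_lipschitz)
    show "(f has_derivative (\<lambda>h. gradf y \<bullet> h)) (at y within cball a r)" for y
      using deriv by (rule has_derivative_at_withinI)
    show "onorm (\<lambda>h. gradf y \<bullet> h) \<le> max 0 B" if "y \<in> cball a r" for y
      using onorm_inner_right[OF bounded_linear_ident, of "gradf y"] B[OF that]
      by (simp add: onorm_id)
  qed auto
  then show ?thesis
    using K lipschitz_on_subset by blast
qed

lemma convex_on_diff_le_cball:
  fixes \<phi> :: "'a::real_normed_vector \<Rightarrow> real"
  assumes cvx: "convex_on UNIV \<phi>"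
    and M: "\<And>y. y \<in> cball 0 (r + 1) \<Longrightarrow> \<bar>\<phi> y\<bar> \<le> M"
    and a: "a \<in> cball 0 r" and b: "b \<in> cball 0 r"
  shows "\<phi> b - \<phi> a \<le> 2 * M * norm (b - a)"
proof (cases "a = b")
  case True
  then show ?thesis
    using M[of a] a by simp
next
  case False
  define t where "t = norm (b - a)"
  have t: "t > 0"
    using False by (simp add: t_def)
  \<comment> \<open>b lies on the segment from a to the point z one unit beyond b\<close>
  define z where "z = b + (1 / t) *\<^sub>R (b - a)"
  define l where "l = t / (1 + t)"
  have z: "z \<in> cball 0 (r + 1)"
    using b t norm_triangle_ineq[of b "(1 / t) *\<^sub>R (b - a)"] by (simp add: z_def t_def)
  have l: "0 \<le> l" "l \<le> 1" "l \<le> t"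
    using t by (auto simp: l_def field_simps)
  have "z - a = ((1 + t) / t) *\<^sub>R (b - a)"
    using t by (simp add: z_def add_divide_distrib scaleR_add_left)
  then have "l *\<^sub>R (z - a) = b - a"
    using t by (simp add: l_def)
  then have "b = (1 - l) *\<^sub>R a + l *\<^sub>R z"
    by (simp add: algebra_simps)
  then have "\<phi> b \<le> (1 - l) * \<phi> a + l * \<phi> z"
    using convex_onD[OF cvx, of l a z] l by simp
  then have "\<phi> b - \<phi> a \<le> l * (\<phi> z - \<phi> a)"
    by (simp add: algebra_simps)
  also have "\<dots> \<le> l * (2 * M)"
    using M[OF z] M[of a] a l by (intro mult_left_mono) auto
  also have "\<dots> \<le> t * (2 * M)"
    using M[of a] a l by (intro mult_right_mono) auto
  finally show ?thesis
    by (simp add: t_def mult.commute)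
qed

lemma convex_on_lipschitz_on_bounded:
  fixes \<phi> :: "'a::euclidean_space \<Rightarrow> real"
  assumes cvx: "convex_on UNIV \<phi>" and "bounded K"
  shows "\<exists>L. L-lipschitz_on K \<phi>"
proof -
  obtain r where "r > 0" and r: "\<forall>y\<in>K. norm y \<le> r"
    using \<open>bounded K\<close> unfolding bounded_pos by blast
  then have K: "K \<subseteq> cball 0 r"
    by auto
  have image_compact: "compact (\<phi> ` cball 0 (r + 1))"
    using convex_on_continuous[OF open_UNIV cvx]
    by (intro compact_continuous_image compact_cball) (rule continuous_on_subset, auto)
  obtain M where "\<forall>v\<in>\<phi> ` cball 0 (r + 1). norm v \<le> M"
    using compact_imp_bounded[OF image_compact] unfolding bounded_iff by blast
  then have M: "\<And>y. y \<in> cball 0 (r + 1) \<Longrightarrow> \<bar>\<phi> y\<bar> \<le> M"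
    by auto
  have "(2 * M)-lipschitz_on (cball 0 r) \<phi>"
  proof (rule lipschitz_onI)
    fix a b :: 'a
    assume a: "a \<in> cball 0 r" and b: "b \<in> cball 0 r"
    show "dist (\<phi> a) (\<phi> b) \<le> 2 * M * dist a b"
      using convex_on_diff_le_cball[OF cvx M a b] convex_on_diff_le_cball[OF cvx M b a]
      by (simp add: dist_real_def dist_norm norm_minus_commute abs_le_iff)
  next
    show "0 \<le> 2 * M"
      using M[of 0] \<open>r > 0\<close> by simp
  qed
  then show ?thesis
    using K lipschitz_on_subset by blast
qed

lemma lipschitz_on_bounded_smooth_plus_convex:
  fixes f \<phi> :: "'a::euclidean_space \<Rightarrow> real"
  assumes "\<And>y. (f has_derivative (\<lambda>h. gradf y \<bullet> h)) (at y)" "continuous_on UNIV gradf"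
    and "convex_on UNIV \<phi>" and "bounded K"
  shows "\<exists>L. L-lipschitz_on K (\<lambda>y. f y + \<phi> y)"
proof -
  obtain L1 L2 where "L1-lipschitz_on K f" "L2-lipschitz_on K \<phi>"
    using lipschitz_on_bounded_if_continuous_gradient[OF assms(1,2,4)]
      convex_on_lipschitz_on_bounded[OF assms(3,4)] by blast
  then show ?thesis
    using lipschitz_on_add by blast
qed

lemma summable_norm_diff_lipschitz_image:
  fixes h :: "'a::real_normed_vector \<Rightarrow> 'b::real_normed_vector"
  assumes lip: "\<And>K. bounded K \<Longrightarrow> \<exists>L. L-lipschitz_on K h"
    and y: "bounded (range y)"
    and sum: "summable (\<lambda>k. norm (y k - z k))"
  shows "summable (\<lambda>k. norm (h (y k) - h (z k)))"
proof -
  have "bounded (range (\<lambda>k. y k - (y k - z k)))"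
    using y summable_imp_bounded[OF sum] unfolding bounded_norm_comp by (rule bounded_minus_comp)
  then have "bounded (range y \<union> range z)"
    using y by simp
  then obtain L where L: "L-lipschitz_on (range y \<union> range z) h"
    using lip by blast
  show ?thesis
  proof (rule summable_comparison_test)
    show "\<exists>N. \<forall>k\<ge>N. norm (norm (h (y k) - h (z k))) \<le> L * norm (y k - z k)"
      using lipschitz_on_normD[OF L] by auto
    show "summable (\<lambda>k. L * norm (y k - z k))"
      using sum by (rule summable_mult)
  qed
qed

lemma summable_bounded_by_increments:
  fixes a P :: "nat \<Rightarrow> real"
  assumes nonneg: "\<And>k. 0 \<le> a k"
    and incr: "\<And>k. a k \<le> P (Suc k) - P k"
    and bound: "\<And>n. P n \<le> B"
  shows "summable a" and "suminf a \<le> B - P 0"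
proof -
  have partial: "(\<Sum>k<n. a k) \<le> B - P 0" for n
  proof -
    have "(\<Sum>k<n. a k) \<le> (\<Sum>k<n. P (Suc k) - P k)"
      by (intro sum_mono incr)
    also have "\<dots> = P n - P 0"
      by (rule sum_lessThan_telescope)
    finally show ?thesis
      using bound[of n] by simp
  qed
  show "summable a"
    using nonneg partial by (rule summableI_nonneg_bounded)
  then show "suminf a \<le> B - P 0"
    using partial by (rule suminf_le_const)
qed

definition consumed_tolerance :: "(nat \<Rightarrow> real) \<Rightarrow> nat \<Rightarrow> (nat \<Rightarrow> nat) \<Rightarrow> real" where
  "consumed_tolerance \<epsilon> m c = (\<Sum>i<m. \<Sum>j<c i. \<epsilon> j)"

lemma consumed_tolerance_counter_Suc:
  assumes "i < m"
  shows "consumed_tolerance \<epsilon> m (c(i := Suc (c i))) = consumed_tolerance \<epsilon> m c + \<epsilon> (c i)"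
proof -
  have "consumed_tolerance \<epsilon> m (c(i := Suc (c i)))
      = (\<Sum>j<m. (\<Sum>l<c j. \<epsilon> l) + (if j = i then \<epsilon> (c i) else 0))"
    unfolding consumed_tolerance_def by (intro sum.cong) auto
  also have "\<dots> = consumed_tolerance \<epsilon> m c + \<epsilon> (c i)"
    unfolding consumed_tolerance_def sum.distrib using assms by simp
  finally show ?thesis .
qed

lemma consumed_tolerance_le:
  assumes "\<And>s. 0 \<le> \<epsilon> s" "summable \<epsilon>"
  shows "consumed_tolerance \<epsilon> m c \<le> real m * (\<Sum>i. \<epsilon> i)"
proof -
  have "consumed_tolerance \<epsilon> m c \<le> (\<Sum>i<m. \<Sum>j. \<epsilon> j)"
    unfolding consumed_tolerance_def using assms by (intro sum_mono sum_le_suminf) auto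
  then show ?thesis
    by simp
qed

lemma truncation_level_less:
  assumes "truncatable \<psi> S m \<delta> \<kappa> T" "level S m x i"
    and "Gamma \<psi> x < ereal a" "ereal a \<le> \<delta>"
  shows "i < m"
proof (rule ccontr)
  assume "\<not> i < m"
  then have "x \<in> S m"
    using \<open>level S m x i\<close> unfolding level_def by auto
  then have "\<delta> \<le> Gamma \<psi> x"
    using \<open>truncatable \<psi> S m \<delta> \<kappa> T\<close> unfolding truncatable_def by auto
  then show False
    using assms(3,4) by simp
qed

lemma truncation_norm_diff_le:
  assumes "truncation \<psi> S m \<epsilon> T x c y c'"
    and tr: "truncatable \<psi> S m \<delta> \<kappa> T"
    and eps: "\<And>s. 0 < \<epsilon> s" "\<And>s. ereal (\<epsilon> s) \<le> \<delta>"
  shows "norm (y - x) \<le> \<kappa> * (consumed_tolerance \<epsilon> m c' - consumed_tolerance \<epsilon> m c)"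
  using assms(1)
proof (induction rule: truncation.induct)
  case (stop x i c)
  then show ?case
    by simp
next
  case (trunc x i c y c')
  let ?a = "\<epsilon> (c i)"
  have "i < m"
    using truncation_level_less[OF tr trunc(1,2) eps(2)] .
  moreover have "x \<in> S i" "x \<notin> S (Suc i)"
    using trunc(1) \<open>i < m\<close> unfolding level_def by auto
  ultimately have jump: "norm (T x ?a - x) \<le> \<kappa> * ?a"
    using tr eps trunc(2) unfolding truncatable_def by blast
  have "norm (y - x) \<le>
      \<kappa> * (consumed_tolerance \<epsilon> m c' - consumed_tolerance \<epsilon> m (c(i := Suc (c i)))) + \<kappa> * ?a"
    using norm_diff_triangle_le[OF trunc.IH jump] .
  also have "\<dots> = \<kappa> * (consumed_tolerance \<epsilon> m c' - consumed_tolerance \<epsilon> m c)"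
    unfolding consumed_tolerance_counter_Suc[OF \<open>i < m\<close>] by (simp add: algebra_simps)
  finally show ?case .
qed

lemma alg_run_norm_diff_le:
  assumes run: "alg_run \<psi> g Gs S m T \<epsilon> \<eta> \<eta>1 \<eta>2 r1 r2 \<Delta>max \<gamma>1 \<gamma>2 lf x0 \<Delta>0 x xt D c"
    and tr: "truncatable \<psi> S m \<delta> \<kappa> T"
    and eps: "\<And>s. 0 < \<epsilon> s" "\<And>s. ereal (\<epsilon> s) \<le> \<delta>"
  shows "norm (x (Suc k) - xt k)
    \<le> \<kappa> * (consumed_tolerance \<epsilon> m (c (Suc k)) - consumed_tolerance \<epsilon> m (c k))"
proof (cases "g (x k) = 0")
  case True
  then show ?thesis
    using run unfolding alg_run_def by simp
next
  case False
  then have "truncation \<psi> S m \<epsilon> T (xt k) (c k) (x (Suc k)) (c (Suc k))"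
    using run unfolding alg_run_def by blast
  then show ?thesis
    using tr eps by (rule truncation_norm_diff_le)
qed

theorem lemma4p7:
  fixes f \<phi> \<psi> :: "'a::euclidean_space \<Rightarrow> real"
    and gradf :: "'a \<Rightarrow> 'a"
    and u :: "'a \<Rightarrow> real" and d :: "'a \<Rightarrow> 'a"
    and Gs :: "'a \<Rightarrow> 'a \<Rightarrow> ereal"
    and S :: "nat \<Rightarrow> 'a set" and m :: nat and \<delta> :: ereal and \<kappa> :: real
    and T :: "'a \<Rightarrow> real \<Rightarrow> 'a"
    and \<eta> \<eta>1 \<eta>2 r1 r2 \<Delta>max \<gamma>1 \<gamma>2 \<Delta>0 :: real
    and \<epsilon> :: "nat \<Rightarrow> real" and lf :: "real \<Rightarrow> real"
    and x0 :: 'a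
    and x xt :: "nat \<Rightarrow> 'a" and D :: "nat \<Rightarrow> real" and c :: "nat \<Rightarrow> nat \<Rightarrow> nat"
  assumes f_C1: "\<forall>y. (f has_derivative (\<lambda>h. gradf y \<bullet> h)) (at y)" "continuous_on UNIV gradf"
    and \<phi>_convex: "convex_on UNIV \<phi>"
    and \<psi>_def: "\<forall>y. \<psi> y = f y + \<phi> y"
    and pg: "pseudo_gradient \<psi> gradf \<phi> u d"
    and Gs_pos: "\<forall>y e. Gs y e > 0"
    and trunc: "truncatable \<psi> S m \<delta> \<kappa> T"
    and params: "0 < \<eta>" "\<eta> < \<eta>1" "\<eta>1 < \<eta>2" "\<eta>2 < 1" "0 < r1" "r1 < 1" "1 < r2"
                "\<Delta>max > 0" "\<gamma>1 > 0" "\<gamma>2 > 0" "\<Delta>0 > 0"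
    and eps: "\<forall>s. \<epsilon> s > 0" "\<forall>s. \<epsilon> (Suc s) < \<epsilon> s" "summable \<epsilon>" "\<forall>s. ereal (\<epsilon> s) \<le> \<delta>"
    and ell: "\<forall>a b. 0 < a \<and> a \<le> b \<longrightarrow> lf b \<le> lf a"
             "\<forall>t>0. 0 \<le> lf t \<and> lf t \<le> 1/2" "(lf \<longlongrightarrow> 0) (at_right 0)"
    and run: "alg_run \<psi> (\<lambda>y. u y *\<^sub>R d y) Gs S m T \<epsilon> \<eta> \<eta>1 \<eta>2 r1 r2 \<Delta>max \<gamma>1 \<gamma>2 lf x0 \<Delta>0
                x xt D c"
    and bounded: "\<exists>R>0. \<forall>k. x k \<in> ball 0 R"
  shows "summable (\<lambda>k. norm (x (Suc k) - xt k)) \<and>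
         (\<Sum>k. norm (x (Suc k) - xt k)) \<le> real m * \<kappa> * (\<Sum>i. \<epsilon> i) \<and>
         summable \<epsilon> \<and>
         summable (\<lambda>k. \<bar>\<psi> (x (Suc k)) - \<psi> (xt k)\<bar>)"
proof -
  have "\<kappa> > 0"
    using trunc unfolding truncatable_def by simp
  define P where "P k = \<kappa> * consumed_tolerance \<epsilon> m (c k)" for k
  have incr: "norm (x (Suc k) - xt k) \<le> P (Suc k) - P k" for k
    using alg_run_norm_diff_le[OF run trunc eps(1)[rule_format] eps(4)[rule_format]]
    unfolding P_def by (simp add: right_diff_distrib)
  have bound: "P n \<le> real m * \<kappa> * (\<Sum>i. \<epsilon> i)" for n
    using mult_left_mono[OF consumed_tolerance_le[OF _ eps(3)], of \<kappa>] eps(1) \<open>\<kappa> > 0\<close>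
    unfolding P_def by (simp add: less_imp_le mult_ac)
  have "P 0 = 0"
    using run unfolding alg_run_def P_def consumed_tolerance_def by simp
  then have summable_jumps: "summable (\<lambda>k. norm (x (Suc k) - xt k))"
    and jumps_le: "(\<Sum>k. norm (x (Suc k) - xt k)) \<le> real m * \<kappa> * (\<Sum>i. \<epsilon> i)"
    using summable_bounded_by_increments[of "\<lambda>k. norm (x (Suc k) - xt k)" P, OF _ incr bound]
    by simp_all
  have "\<psi> = (\<lambda>y. f y + \<phi> y)"
    using \<psi>_def by auto
  then have "\<exists>L. L-lipschitz_on K \<psi>" if "bounded K" for K
    using lipschitz_on_bounded_smooth_plus_convex[OF f_C1(1)[rule_format] f_C1(2) \<phi>_convex that]
    by simp
  moreover have "bounded (range (\<lambda>k. x (Suc k)))"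
    using bounded by (meson bounded_ball bounded_subset image_subset_iff)
  ultimately have "summable (\<lambda>k. norm (\<psi> (x (Suc k)) - \<psi> (xt k)))"
    using summable_jumps by (rule summable_norm_diff_lipschitz_image)
  then show ?thesis
    using summable_jumps jumps_le eps(3) by simp
qed

end
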